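(* Let $X$ be a topological space admitting a metrizable compactification $\tilde X$, and let $T\colon X\to X$ be continuous. If $d$ and $c$ are the restrictions to $X$ of metrics $\tilde d$ and $\tilde c$ on $\tilde X$ compatible with its topology, then $h^d(T)=h^c(T)$.
   Context: For a metric $d$ on $X$: $d_n(x,y)=\max_{0\le j<n}d(T^jx,T^jy)$, $\mathcal B_{d_n}(\varepsilon)$ is the family of open $d_n$-balls of radius $\varepsilon$ centered at points of $X$, $N(\mathcal A)$ denotes the least cardinality of a subcover of a cover $\mathcal A$, and the $d$-entropy is $h^d(T)=\sup_{\varepsilon>0}\lim_n\frac1n\log N(\mathcal B_{d_n}(\varepsilon))$. *)

theory Defs
  imports "HOL-Analysis.Analysis"
begin

definition dyn_metric :: "('a \<Rightarrow> 'a \<Rightarrow> real) \<Rightarrow> ('a \<Rightarrow> 'a) \<Rightarrow> nat \<Rightarrow> 'a \<Rightarrow> 'a \<Rightarrow> real" where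
  "dyn_metric d T n x y = (MAX j\<in>{..<n}. d ((T ^^ j) x) ((T ^^ j) y))"

definition dyn_balls :: "'a set \<Rightarrow> ('a \<Rightarrow> 'a \<Rightarrow> real) \<Rightarrow> ('a \<Rightarrow> 'a) \<Rightarrow> nat \<Rightarrow> real \<Rightarrow> 'a set set" where
  "dyn_balls X d T n eps = {{y \<in> X. dyn_metric d T n x y < eps} | x. x \<in> X}"

definition min_subcover_card :: "'a set \<Rightarrow> 'a set set \<Rightarrow> nat" where
  "min_subcover_card X A = Inf {card F | F. F \<subseteq> A \<and> finite F \<and> X \<subseteq> \<Union>F}"

definition d_entropy :: "'a set \<Rightarrow> ('a \<Rightarrow> 'a \<Rightarrow> real) \<Rightarrow> ('a \<Rightarrow> 'a) \<Rightarrow> ereal" where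
  "d_entropy X d T = (SUP eps\<in>{0<..}.
     limsup (\<lambda>n. ereal (ln (real (min_subcover_card X (dyn_balls X d T n eps))) / real n)))"

end

theory Submission
  imports Defs
begin

text \<open>A continuous map out of a compact metric space is uniformly continuous, so the identity of
  the compactification is uniformly continuous from either metric to the other. Hence for every
  \<open>\<epsilon> > 0\<close> there is \<open>\<delta> > 0\<close> such that every \<open>d\<^sub>n\<close>-ball of radius \<open>\<delta>\<close> lies in the \<open>c\<^sub>n\<close>-ball
  of radius \<open>\<epsilon>\<close> with the same centre, for all \<open>n\<close> simultaneously. This gives
  \<open>N(\<B>\<^sub>c\<^sub>n(\<epsilon>)) \<le> N(\<B>\<^sub>d\<^sub>n(\<delta>))\<close>, whence \<open>h\<^sup>c(T) \<le> h\<^sup>d(T)\<close>, and symmetrically.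
  Total boundedness of the compactification makes all these covering numbers finite.\<close>

lemma compact_metrics_uniformly_comparable:
  assumes "compact_space K"
    and "Metric_space (topspace K) d" and "Metric_space.mtopology (topspace K) d = K"
    and "Metric_space (topspace K) c" and "Metric_space.mtopology (topspace K) c = K"
    and "e > 0"
  shows "\<exists>\<delta>>0. \<forall>x\<in>topspace K. \<forall>y\<in>topspace K. d x y < \<delta> \<longrightarrow> c x y < e"
proof -
  let ?md = "metric (topspace K, d)" and ?mc = "metric (topspace K, c)"
  have "mtopology_of ?md = K" "mtopology_of ?mc = K"
    using assms(2-5) Metric_space.mtopology_of by metis+
  then have "uniformly_continuous_map ?md ?mc id"
    using continuous_imp_uniformly_continuous_map[of ?md ?mc id] assms(1) by simp
  then obtain \<delta> where "\<delta> > 0" and \<delta>: "\<forall>x \<in> mspace ?md. \<forall>y \<in> mspace ?md.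
      mdist ?md y x < \<delta> \<longrightarrow> mdist ?mc (id y) (id x) < e"
    unfolding uniformly_continuous_map_def using assms(6) by blast
  have metric_eqs: "mspace ?md = topspace K" "mdist ?md = d" "mdist ?mc = c"
    using assms(2,4) Metric_space.mspace_metric Metric_space.mdist_metric by metis+
  have "\<forall>y\<in>topspace K. \<forall>x\<in>topspace K. d x y < \<delta> \<longrightarrow> c x y < e"
    using \<delta> unfolding metric_eqs id_apply .
  with \<open>\<delta> > 0\<close> show ?thesis
    by blast
qed

lemma funpow_mem:
  assumes "T ` X \<subseteq> X" "x \<in> X"
  shows "(T ^^ j) x \<in> X"
  using assms by (induction j) auto

lemma dyn_metric_less_iff:
  assumes "n > 0"
  shows "dyn_metric d T n x y < e \<longleftrightarrow> (\<forall>j<n. d ((T ^^ j) x) ((T ^^ j) y) < e)"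
  using assms unfolding dyn_metric_def by (subst Max_less_iff) auto

lemma min_subcover_card_le_of_refines:
  assumes "\<exists>F\<subseteq>A. finite F \<and> X \<subseteq> \<Union>F"
    and "\<And>U. U \<in> A \<Longrightarrow> \<exists>V\<in>B. U \<subseteq> V"
  shows "min_subcover_card X B \<le> min_subcover_card X A"
proof -
  let ?S = "{card F | F. F \<subseteq> A \<and> finite F \<and> X \<subseteq> \<Union>F}"
  have "Inf ?S \<in> ?S"
    using assms(1) by (intro Inf_nat_def1) blast
  then obtain F where F: "F \<subseteq> A" "finite F" "X \<subseteq> \<Union>F"
    and card_F: "card F = min_subcover_card X A"
    unfolding min_subcover_card_def by auto
  have "\<forall>U\<in>F. \<exists>V. V \<in> B \<and> U \<subseteq> V"
    using assms(2) F(1) by blast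
  then obtain f where f: "\<forall>U\<in>F. f U \<in> B \<and> U \<subseteq> f U"
    by (rule bchoice[THEN exE])
  have "f ` F \<subseteq> B" "finite (f ` F)" "X \<subseteq> \<Union>(f ` F)"
    using f F(2,3) by blast+
  then have "min_subcover_card X B \<le> card (f ` F)"
    unfolding min_subcover_card_def by (intro cInf_lower) auto
  also have "\<dots> \<le> card F"
    using F(2) by (rule card_image_le)
  finally show ?thesis
    using card_F by simp
qed

lemma dyn_balls_refine:
  assumes "X \<subseteq> M" "T ` X \<subseteq> X" "n > 0"
    and close: "\<forall>x\<in>M. \<forall>y\<in>M. d x y < \<delta> \<longrightarrow> c x y < e"
    and "U \<in> dyn_balls X d T n \<delta>"
  shows "\<exists>V\<in>dyn_balls X c T n e. U \<subseteq> V"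
proof -
  obtain x where x: "x \<in> X" and U: "U = {y \<in> X. dyn_metric d T n x y < \<delta>}"
    using assms(5) unfolding dyn_balls_def by blast
  have "U \<subseteq> {y \<in> X. dyn_metric c T n x y < e}"
  proof
    fix y assume "y \<in> U"
    then have y: "y \<in> X" and "\<forall>j<n. d ((T ^^ j) x) ((T ^^ j) y) < \<delta>"
      using U dyn_metric_less_iff[OF assms(3), of d T x y \<delta>] by auto
    moreover have "(T ^^ j) x \<in> M" "(T ^^ j) y \<in> M" for j
      using funpow_mem[OF assms(2)] x y assms(1) by blast+
    ultimately show "y \<in> {y \<in> X. dyn_metric c T n x y < e}"
      using close dyn_metric_less_iff[OF assms(3), of c T x y e] by auto
  qed
  moreover have "{y \<in> X. dyn_metric c T n x y < e} \<in> dyn_balls X c T n e"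
    using x unfolding dyn_balls_def by blast
  ultimately show ?thesis by blast
qed

lemma dyn_balls_finite_subcover:
  assumes "Metric_space M d" "Metric_space.mtotally_bounded M d M"
    and "X \<subseteq> M" "T ` X \<subseteq> X" "e > 0" "n > 0"
  shows "\<exists>F\<subseteq>dyn_balls X d T n e. finite F \<and> X \<subseteq> \<Union>F"
proof -
  interpret Metric_space M d by fact
  have orbit_in_M: "x \<in> X \<Longrightarrow> (T ^^ j) x \<in> M" for x j
    using funpow_mem[OF assms(4)] assms(3) by blast
  have "\<exists>C. finite C \<and> C \<subseteq> M \<and> M \<subseteq> (\<Union>c\<in>C. mball c (e/2))"
    using assms(2,5) unfolding mtotally_bounded_def by simp
  then obtain C where C: "finite C" "C \<subseteq> M" "M \<subseteq> (\<Union>c\<in>C. mball c (e/2))"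
    by blast
  text \<open>Points of \<open>X\<close> whose first \<open>n\<close> iterates follow the itinerary \<open>g\<close> through \<open>C\<close>.\<close>
  define cell where "cell g = {x \<in> X. \<forall>j<n. d (g j) ((T ^^ j) x) < e/2}" for g
  define G where "G = {g \<in> {..<n} \<rightarrow>\<^sub>E C. cell g \<noteq> {}}"
  define centre where "centre g = (SOME x. x \<in> cell g)" for g
  define F where "F = (\<lambda>g. {y \<in> X. dyn_metric d T n (centre g) y < e}) ` G"
  have "G \<subseteq> {..<n} \<rightarrow>\<^sub>E C"
    unfolding G_def by blast
  then have "finite G"
    using C(1) by (simp add: finite_PiE finite_subset)
  have centre: "centre g \<in> cell g" if "g \<in> G" for g
    using that unfolding G_def centre_def by (simp add: some_in_eq)
  then have centre_in_X: "centre g \<in> X" if "g \<in> G" for g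
    using that unfolding cell_def by blast
  have cells_cover: "\<exists>g\<in>G. x \<in> cell g" if x: "x \<in> X" for x
  proof -
    have "\<forall>j\<in>{..<n}. \<exists>c. c \<in> C \<and> d c ((T ^^ j) x) < e/2"
    proof
      fix j
      obtain c where "c \<in> C" "(T ^^ j) x \<in> mball c (e/2)"
        using C(3) orbit_in_M[OF x, of j] by blast
      then show "\<exists>c. c \<in> C \<and> d c ((T ^^ j) x) < e/2"
        by auto
    qed
    then obtain g where g: "\<forall>j\<in>{..<n}. g j \<in> C \<and> d (g j) ((T ^^ j) x) < e/2"
      by (rule bchoice[THEN exE])
    have "x \<in> cell (restrict g {..<n})"
      using x g unfolding cell_def by simp
    moreover have "restrict g {..<n} \<in> {..<n} \<rightarrow>\<^sub>E C"
      using g by (simp add: restrict_PiE_iff)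
    ultimately show ?thesis
      unfolding G_def by blast
  qed
  have cell_in_ball: "x \<in> cell g \<Longrightarrow> y \<in> cell g \<Longrightarrow> g ` {..<n} \<subseteq> M
      \<Longrightarrow> dyn_metric d T n x y < e" for g x y
  proof -
    assume x: "x \<in> cell g" and y: "y \<in> cell g" and gM: "g ` {..<n} \<subseteq> M"
    have "d ((T ^^ j) x) ((T ^^ j) y) < e" if j: "j < n" for j
    proof -
      have "x \<in> X" "y \<in> X" "g j \<in> M"
        using x y gM j unfolding cell_def by auto
      then have "d ((T ^^ j) x) ((T ^^ j) y) \<le> d (g j) ((T ^^ j) x) + d (g j) ((T ^^ j) y)"
        by (intro triangle'' orbit_in_M)
      also have "\<dots> < e/2 + e/2"
        using x y j unfolding cell_def by (intro add_strict_mono) auto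
      finally show ?thesis by simp
    qed
    then show ?thesis
      by (simp add: dyn_metric_less_iff[OF assms(6)])
  qed
  have "F \<subseteq> dyn_balls X d T n e"
    using centre_in_X unfolding F_def dyn_balls_def by blast
  moreover have "X \<subseteq> \<Union>F"
  proof
    fix x assume x: "x \<in> X"
    then obtain g where g: "g \<in> G" "x \<in> cell g"
      using cells_cover by blast
    have "g ` {..<n} \<subseteq> M"
      using g(1) C(2) unfolding G_def by auto
    then have "x \<in> {y \<in> X. dyn_metric d T n (centre g) y < e}"
      using cell_in_ball[OF centre[OF g(1)] g(2)] x by simp
    moreover have "{y \<in> X. dyn_metric d T n (centre g) y < e} \<in> F"
      using g(1) unfolding F_def by (rule imageI)
    ultimately show "x \<in> \<Union>F"
      by blast
  qed
  moreover have "finite F"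
    using \<open>finite G\<close> unfolding F_def by simp
  ultimately show ?thesis
    by blast
qed

lemma ln_of_nat_mono:
  fixes a b :: nat
  assumes "a \<le> b"
  shows "ln (real a) \<le> ln (real b)"
  using assms by (cases "a = 0"; cases "b = 0") auto

lemma d_entropy_mono:
  assumes "Metric_space M d" "Metric_space.mtotally_bounded M d M"
    and "X \<subseteq> M" "T ` X \<subseteq> X"
    and uniform: "\<And>e. e > 0 \<Longrightarrow> \<exists>\<delta>>0. \<forall>x\<in>M. \<forall>y\<in>M. d x y < \<delta> \<longrightarrow> c x y < e"
  shows "d_entropy X c T \<le> d_entropy X d T"
  unfolding d_entropy_def
proof (rule SUP_least)
  let ?growth = "\<lambda>d e n. ereal (ln (real (min_subcover_card X (dyn_balls X d T n e))) / real n)"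
  fix e :: real assume "e \<in> {0<..}"
  then obtain \<delta> where "\<delta> > 0" and \<delta>: "\<forall>x\<in>M. \<forall>y\<in>M. d x y < \<delta> \<longrightarrow> c x y < e"
    using uniform[of e] by auto
  have "?growth c e n \<le> ?growth d \<delta> n" for n
  proof (cases "n = 0")
    case False
    then have "\<exists>F\<subseteq>dyn_balls X d T n \<delta>. finite F \<and> X \<subseteq> \<Union>F"
      using dyn_balls_finite_subcover[OF assms(1-4) \<open>\<delta> > 0\<close>] by simp
    then have "min_subcover_card X (dyn_balls X c T n e) \<le> min_subcover_card X (dyn_balls X d T n \<delta>)"
      using dyn_balls_refine[OF assms(3,4) _ \<delta>] False
      by (intro min_subcover_card_le_of_refines) simp_all
    then show ?thesis
      by (simp add: divide_right_mono ln_of_nat_mono)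
  qed simp
  then have "limsup (?growth c e) \<le> limsup (?growth d \<delta>)"
    by (intro Limsup_mono) auto
  also have "\<dots> \<le> (SUP \<delta>\<in>{0<..}. limsup (?growth d \<delta>))"
    using \<open>\<delta> > 0\<close> by (intro SUP_upper) auto
  finally show "limsup (?growth c e) \<le> (SUP \<delta>\<in>{0<..}. limsup (?growth d \<delta>))" .
qed

theorem corollary2p29:
  fixes K :: "'a topology" and X :: "'a set" and T :: "'a \<Rightarrow> 'a"
    and dt ct :: "'a \<Rightarrow> 'a \<Rightarrow> real"
  assumes "compact_space K"
    and "X \<subseteq> topspace K"
    and "K closure_of X = topspace K"
    and "Metric_space (topspace K) dt"
    and "Metric_space.mtopology (topspace K) dt = K"
    and "Metric_space (topspace K) ct"
    and "Metric_space.mtopology (topspace K) ct = K"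
    and "continuous_map (subtopology K X) (subtopology K X) T"
  shows "d_entropy X dt T = d_entropy X ct T"
proof -
  have TX: "T ` X \<subseteq> X"
    using assms(2,8) continuous_map_image_subset_topspace by (metis topspace_subtopology_subset)
  have bounded_dt: "Metric_space.mtotally_bounded (topspace K) dt (topspace K)"
    and bounded_ct: "Metric_space.mtotally_bounded (topspace K) ct (topspace K)"
    using assms(1,4-7) Metric_space.compact_space_eq_mcomplete_mtotally_bounded by metis+
  have "d_entropy X ct T \<le> d_entropy X dt T"
    by (intro d_entropy_mono[OF assms(4) bounded_dt assms(2) TX]
        compact_metrics_uniformly_comparable[OF assms(1,4-7)])
  moreover have "d_entropy X dt T \<le> d_entropy X ct T"
    by (intro d_entropy_mono[OF assms(6) bounded_ct assms(2) TX]
        compact_metrics_uniformly_comparable[OF assms(1,6,7,4,5)])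
  ultimately show ?thesis
    by (rule antisym[rotated])
qed

end
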